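(* For every alphabet $\Sigma$, every $n\ge 2$ and every $n$-gram LM $p$ over $\Sigma$, there exists a single-layer hard attention transformer LM with $n-1$ attention heads that is weakly equivalent to $p$.
   Context: Let $\Sigma$ be a finite nonempty alphabet and let $\mathrm{EOS},\mathrm{BOS}\notin\Sigma$ be distinct symbols; put $\overline\Sigma=\Sigma\cup\{\mathrm{EOS}\}$ and $\underline\Sigma=\Sigma\cup\{\mathrm{BOS}\}$. A language model (LM) over $\Sigma$ is a probability distribution $p$ on $\Sigma^*$ given autoregressively by $p(y)=p(\mathrm{EOS}\mid y)\prod_{t=1}^{|y|}p(y_t\mid y_{<t})$, where each $p(\cdot\mid y_{<t})$ is a probability distribution on $\overline\Sigma$. Two LMs $p,q$ over $\Sigma$ are weakly equivalent if $p(y)=q(y)$ for all $y\in\Sigma^*$. For $n\ge2$, an $n$-gram LM is an LM such that, after left-padding every string with $n-1$ copies of $\mathrm{BOS}$, $p(y_t\mid y_{<t})=p(y_t\mid y_{t-n+1}\cdots y_{t-1})$ depends only on the history $y_{t-n+1}\cdots y_{t-1}\in\underline\Sigma^{\,n-1}$ (the last $n-1$ symbols of the padded prefix); the distributions on $\overline\Sigma$ assigned to the histories are arbitrary (probabilities may be $0$). Transformers. A transformer of width $D$ processes a string $w=w_1\cdots w_T$ over $\underline\Sigma$ (for an LM, the prefix $y_{<t}$ left-padded with $n-1$ copies of BOS) as follows. A static encoding gives $x^0_j=r(w_j,j)\in\mathbb R^D$ for a function $r:\underline\Sigma\times\mathbb N\to\mathbb R^D$. An attention head with query, key, value, output functions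 $Q,K,V,O:\mathbb R^D\to\mathbb R^D$, scoring function $f:\mathbb R^D\times\mathbb R^D\to\mathbb R$ and normalization function $\pi$ maps $(x_1,\dots,x_T)$ to $(z_1,\dots,z_T)$ where, for each position $s$, $q_s=Q(x_s)$, $k_j=K(x_j)$, $v_j=V(x_j)$, $\sigma=\pi(f(q_s,k_1),\dots,f(q_s,k_s))$ (a probability vector), $a_s=\sum_{j=1}^s\sigma_jv_j+x_s$, $z_s=O(a_s)+a_s$. A layer with $H$ heads applies $H$ heads to the same input and maps the concatenation of the $H$ outputs at each position back to $\mathbb R^D$ with a head-combining function $\mathcal H:\mathbb R^{HD}\to\mathbb R^D$; an $L$-layer transformer composes $L$ layers after $r$. Given a final function $F:\mathbb R^D\to\mathbb R^D$ and an output matrix $E\in(\mathbb R\cup\{-\infty\})^{|\overline\Sigma|\times D}$ (with $\exp(-\infty)=0$), the transformer LM sets $p(y_t\mid y_{<t})=\mathrm{softmax}(E\,F(x^L))_{y_t}$, where $x^L$ is the last-layer representation at the last position of the padded prefix $y_{<t}$. In this definition $r,Q,K,V,O,f,\mathcal H,F$ are arbitrary functions. Hard attention means $\pi=\mathrm{hardmax}$, where $\mathrm{hardmax}(x)_d=1/m$ if $d\in\arg\max x$ with $m=|\arg\max x|$, and $0$ otherwise. Sparse attention means $\pi=\mathrm{sparsemax}$, $\mathrm{sparsemax}(x)=\arg\min_{p\in\Delta}\|p-x\|_2^2$ over the probability simplex $\Delta$. *)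

theory Defs
  imports "HOL-Analysis.Analysis" "HOL-Library.Extended_Real"
begin

datatype 'a eos_sym = Tok 'a | EOS
datatype 'a bos_sym = BTok 'a | BOS

text \<open>p y e is the conditional probability p(e | y) of the next symbol e (in the alphabet
  extended by EOS) given the prefix y.\<close>
type_synonym 'a cond_lm = "'a list \<Rightarrow> 'a eos_sym \<Rightarrow> real"

definition is_next_distrib :: "('a::finite eos_sym \<Rightarrow> real) \<Rightarrow> bool" where
  "is_next_distrib q \<longleftrightarrow> (\<forall>e. 0 \<le> q e) \<and> q EOS + (\<Sum>a\<in>UNIV. q (Tok a)) = 1"

definition lm_prob :: "'a cond_lm \<Rightarrow> 'a list \<Rightarrow> real" where
  "lm_prob p y = p y EOS * (\<Prod>t<length y. p (take t y) (Tok (y ! t)))"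

definition is_LM :: "('a::finite) cond_lm \<Rightarrow> bool" where
  "is_LM p \<longleftrightarrow> (\<forall>y. is_next_distrib (p y)) \<and> (lm_prob p has_sum 1) UNIV"

definition weakly_equiv :: "'a cond_lm \<Rightarrow> 'a cond_lm \<Rightarrow> bool" where
  "weakly_equiv p q \<longleftrightarrow> (\<forall>y. lm_prob p y = lm_prob q y)"

definition padded :: "nat \<Rightarrow> 'a list \<Rightarrow> 'a bos_sym list" where
  "padded n y = replicate (n - 1) BOS @ map BTok y"

definition history :: "nat \<Rightarrow> 'a list \<Rightarrow> 'a bos_sym list" where
  "history n y = drop (length (padded n y) - (n - 1)) (padded n y)"

definition is_ngram_LM :: "nat \<Rightarrow> ('a::finite) cond_lm \<Rightarrow> bool" where
  "is_ngram_LM n p \<longleftrightarrow> is_LM p \<and> (\<exists>P. \<forall>y. p y = P (history n y))"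

text \<open>Vectors of R^D are represented as functions nat => real vanishing at indices >= D.\<close>
type_synonym vec = "nat \<Rightarrow> real"

definition in_width :: "nat \<Rightarrow> vec \<Rightarrow> bool" where
  "in_width D x \<longleftrightarrow> (\<forall>i\<ge>D. x i = 0)"

record head =
  hQ :: "vec \<Rightarrow> vec"
  hK :: "vec \<Rightarrow> vec"
  hV :: "vec \<Rightarrow> vec"
  hO :: "vec \<Rightarrow> vec"
  hf :: "vec \<Rightarrow> vec \<Rightarrow> real"

text \<open>A layer: its heads and the head-combining function, which receives the H head
  outputs (indexed by h < H) at a position.\<close>
record layer =
  heads :: "head list"
  combine :: "(nat \<Rightarrow> vec) \<Rightarrow> vec"

record 'a transformer =
  width :: nat
  enc :: "'a bos_sym \<Rightarrow> nat \<Rightarrow> vec"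
  layers :: "layer list"
  final :: "vec \<Rightarrow> vec"
  outm :: "'a eos_sym \<Rightarrow> nat \<Rightarrow> ereal"

definition head_ok :: "nat \<Rightarrow> head \<Rightarrow> bool" where
  "head_ok D h \<longleftrightarrow> (\<forall>x. in_width D x \<longrightarrow>
      in_width D (hQ h x) \<and> in_width D (hK h x) \<and> in_width D (hV h x) \<and> in_width D (hO h x))"

definition layer_ok :: "nat \<Rightarrow> layer \<Rightarrow> bool" where
  "layer_ok D l \<longleftrightarrow> (\<forall>h\<in>set (heads l). head_ok D h) \<and>
      (\<forall>Z. (\<forall>i. in_width D (Z i)) \<longrightarrow> in_width D (combine l Z))"

text \<open>All component functions map R^D to R^D; the output matrix has D columns
  (entries at columns >= D are irrelevant, see tf_logit).\<close>
definition wf_transformer :: "'a transformer \<Rightarrow> bool" where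
  "wf_transformer T \<longleftrightarrow>
     (\<forall>s j. in_width (width T) (enc T s j)) \<and>
     (\<forall>l\<in>set (layers T). layer_ok (width T) l) \<and>
     (\<forall>x. in_width (width T) x \<longrightarrow> in_width (width T) (final T x))"

definition hardmax :: "real list \<Rightarrow> real list" where
  "hardmax xs = map (\<lambda>x. if x = Max (set xs)
        then 1 / real (card {d. d < length xs \<and> xs ! d = Max (set xs)}) else 0) xs"

text \<open>One attention head with normalization pi, applied to the sequence xs
  (list index i corresponds to position i+1).\<close>
definition head_apply :: "(real list \<Rightarrow> real list) \<Rightarrow> head \<Rightarrow> vec list \<Rightarrow> vec list" where
  "head_apply \<pi> h xs = map (\<lambda>i.
     let q = hQ h (xs ! i);
         \<sigma> = \<pi> (map (\<lambda>j. hf h q (hK h (xs ! j))) [0..<Suc i]);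
         a = (\<lambda>d. (\<Sum>j\<le>i. \<sigma> ! j * hV h (xs ! j) d) + (xs ! i) d)
     in (\<lambda>d. hO h a d + a d)) [0..<length xs]"

definition layer_apply :: "(real list \<Rightarrow> real list) \<Rightarrow> layer \<Rightarrow> vec list \<Rightarrow> vec list" where
  "layer_apply \<pi> l xs = map (\<lambda>i. combine l (\<lambda>h. if h < length (heads l)
        then head_apply \<pi> (heads l ! h) xs ! i else (\<lambda>_. 0))) [0..<length xs]"

text \<open>Representations after all layers; positions are 1-based in the static encoding.\<close>
definition tf_reps :: "(real list \<Rightarrow> real list) \<Rightarrow> 'a transformer \<Rightarrow> 'a bos_sym list \<Rightarrow> vec list" where
  "tf_reps \<pi> T w = fold (layer_apply \<pi>) (layers T) (map (\<lambda>j. enc T (w ! j) (Suc j)) [0..<length w])"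

text \<open>Logit of symbol e: the e-th entry of E F(x^L) at the last position (extended-real
  arithmetic; Isabelle's convention -inf * 0 = 0).\<close>
definition tf_logit :: "(real list \<Rightarrow> real list) \<Rightarrow> 'a transformer \<Rightarrow> 'a bos_sym list \<Rightarrow> 'a eos_sym \<Rightarrow> ereal" where
  "tf_logit \<pi> T w e = (\<Sum>d<width T. outm T e d * ereal (final T (last (tf_reps \<pi> T w)) d))"

text \<open>exp extended with exp(-inf) = 0 (the value at +inf is never used, see tf_output_ok).\<close>
definition exp_ext :: "ereal \<Rightarrow> real" where
  "exp_ext x = (case x of ereal r \<Rightarrow> exp r | _ \<Rightarrow> 0)"

text \<open>The softmax is well defined: no logit is +inf and not all are -inf.\<close>
definition tf_output_ok :: "nat \<Rightarrow> (real list \<Rightarrow> real list) \<Rightarrow> 'a transformer \<Rightarrow> bool" where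
  "tf_output_ok n \<pi> T \<longleftrightarrow> (\<forall>y. (\<forall>e. tf_logit \<pi> T (padded n y) e < \<infinity>) \<and>
                                 (\<exists>e. - \<infinity> < tf_logit \<pi> T (padded n y) e))"

definition tf_cond :: "nat \<Rightarrow> (real list \<Rightarrow> real list) \<Rightarrow> ('a::finite) transformer \<Rightarrow> 'a cond_lm" where
  "tf_cond n \<pi> T y e = exp_ext (tf_logit \<pi> T (padded n y) e) /
     (exp_ext (tf_logit \<pi> T (padded n y) EOS) + (\<Sum>a\<in>UNIV. exp_ext (tf_logit \<pi> T (padded n y) (Tok a))))"

end

theory Submission
  imports Defs
begin

text \<open>Each of the n - 1 heads of a single layer looks back a fixed distance h: the query
  position minus h is the unique maximiser of the score -|i - h - j|, so hardmax copies the
  code of that symbol. The head-combining function thus sees the whole history and writes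
  ln p(e | history) into one coordinate per output symbol e, together with an indicator of
  p(e | history) = 0 that an output weight -\<infinity> turns into the logit -\<infinity>. Softmax of
  these logits gives back the conditional distribution.\<close>

definition bos_code :: "'a::countable bos_sym \<Rightarrow> real" where
  "bos_code s = (case s of BOS \<Rightarrow> 0 | BTok a \<Rightarrow> real (Suc (to_nat a)))"

lemma inj_bos_code: "inj bos_code"
  unfolding inj_def bos_code_def by (auto split: bos_sym.splits)

definition eos_index :: "'a::countable eos_sym \<Rightarrow> nat" where
  "eos_index e = (case e of EOS \<Rightarrow> 0 | Tok a \<Rightarrow> Suc (to_nat a))"

lemma hardmax_nth_unique_max:
  assumes k: "k < length ys"
    and less: "\<And>j. j < length ys \<Longrightarrow> j \<noteq> k \<Longrightarrow> ys ! j < ys ! k"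
    and j: "j < length ys"
  shows "hardmax ys ! j = (if j = k then 1 else 0)"
proof -
  have max: "Max (set ys) = ys ! k"
  proof (rule Max_eqI)
    show "y \<le> ys ! k" if "y \<in> set ys" for y
      using that less by (metis in_set_conv_nth less_imp_le order_refl)
  qed (use k in auto)
  have "{d. d < length ys \<and> ys ! d = ys ! k} = {k}"
    using k less by (auto, metis less_irrefl)
  then show ?thesis
    unfolding hardmax_def using j max less[of j] by auto
qed

definition position_enc :: "'a::countable bos_sym \<Rightarrow> nat \<Rightarrow> vec" where
  "position_enc s j = (\<lambda>d. if d = 0 then bos_code s else if d = 1 then real j else 0)"

definition lookback_head :: "nat \<Rightarrow> head" where
  "lookback_head h = \<lparr>hQ = id, hK = id, hV = (\<lambda>x d. if d = 2 then x 0 else 0), hO = (\<lambda>_ _. 0),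
      hf = (\<lambda>q k. - \<bar>q 1 - real h - k 1\<bar>)\<rparr>"

lemma lookback_head_apply:
  fixes w :: "'a::countable bos_sym list"
  assumes i: "i < length w" and h: "h \<le> i"
  shows "(head_apply hardmax (lookback_head h) (map (\<lambda>j. position_enc (w ! j) (Suc j)) [0..<length w]) ! i) 2
         = bos_code (w ! (i - h))"
proof -
  define xs where "xs = map (\<lambda>j. position_enc (w ! j) (Suc j)) [0..<length w]"
  define sc where
    "sc = map (\<lambda>j. hf (lookback_head h) (hQ (lookback_head h) (xs ! i)) (hK (lookback_head h) (xs ! j))) [0..<Suc i]"
  have xs_nth: "xs ! j = position_enc (w ! j) (Suc j)" if "j < length w" for j
    using that unfolding xs_def by simp
  have sc_nth: "sc ! j = - \<bar>real i - real h - real j\<bar>" if "j < Suc i" for j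
    using that i unfolding sc_def by (simp del: upt_Suc add: xs_nth lookback_head_def position_enc_def)
  have attention: "hardmax sc ! j = (if j = i - h then 1 else 0)" if "j < Suc i" for j
    by (rule hardmax_nth_unique_max) (use that h sc_nth in \<open>auto simp: sc_def\<close>)
  have "(\<Sum>j\<le>i. hardmax sc ! j * hV (lookback_head h) (xs ! j) 2)
      = (\<Sum>j\<le>i. if j = i - h then hV (lookback_head h) (xs ! j) 2 else 0)"
    by (rule sum.cong) (auto simp: attention)
  also have "\<dots> = hV (lookback_head h) (xs ! (i - h)) 2"
    by (simp add: sum.delta)
  finally have attended: "(\<Sum>j\<le>i. hardmax sc ! j * hV (lookback_head h) (xs ! j) 2) = bos_code (w ! (i - h))"
    using i by (simp add: xs_nth lookback_head_def position_enc_def)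
  have "(head_apply hardmax (lookback_head h) xs ! i) 2 =
     (\<Sum>j\<le>i. hardmax sc ! j * hV (lookback_head h) (xs ! j) 2) + (xs ! i) 2"
    unfolding head_apply_def sc_def using i
    by (simp add: xs_def Let_def) (simp add: lookback_head_def)
  then show ?thesis
    using attended i by (simp add: xs_def position_enc_def)
qed

definition ln_ereal :: "real \<Rightarrow> ereal" where
  "ln_ereal x = (if 0 < x then ereal (ln x) else - \<infinity>)"

lemma exp_ext_ln_ereal: "0 \<le> x \<Longrightarrow> exp_ext (ln_ereal x) = x"
  by (auto simp: ln_ereal_def exp_ext_def)

lemma next_distrib_softmax_ln:
  assumes "is_next_distrib q"
  shows "exp_ext (ln_ereal (q e)) /
           (exp_ext (ln_ereal (q EOS)) + (\<Sum>a\<in>UNIV. exp_ext (ln_ereal (q (Tok a))))) = q e"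
  using assms unfolding is_next_distrib_def by (simp add: exp_ext_ln_ereal)

lemma next_distrib_ex_pos:
  assumes "is_next_distrib q"
  shows "\<exists>e. 0 < q e"
proof (rule ccontr)
  assume "\<nexists>e. 0 < q e"
  then have "\<forall>e. q e = 0"
    using assms unfolding is_next_distrib_def by (metis order_le_less)
  then show False
    using assms unfolding is_next_distrib_def by simp
qed

text \<open>Symbol e owns coordinates 3 + 2 eos_index e (carrying ln q e) and 4 + 2 eos_index e
  (carrying the indicator of q e \<le> 0); coordinates 0, 1, 2 are used by the encoding and the heads.\<close>
definition log_features :: "nat \<Rightarrow> ('a::countable eos_sym \<Rightarrow> real) \<Rightarrow> vec" where
  "log_features D q d = (if 3 \<le> d \<and> d < D then
     (let e = inv eos_index ((d - 3) div 2) in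
        if even (d - 3) then (if 0 < q e then ln (q e) else 0) else (if 0 < q e then 0 else 1))
     else 0)"

definition log_readout :: "'a::countable eos_sym \<Rightarrow> nat \<Rightarrow> ereal" where
  "log_readout e d =
     (if d = 3 + 2 * eos_index e then 1 else if d = 4 + 2 * eos_index e then - \<infinity> else 0)"

lemma log_readout_features:
  assumes "4 + 2 * eos_index e < D"
  shows "(\<Sum>d<D. log_readout e d * ereal (log_features D q d)) = ln_ereal (q e)"
proof -
  have inj: "inj eos_index"
    unfolding inj_def eos_index_def by (auto split: eos_sym.splits)
  let ?c = "3 + 2 * eos_index e"
  have "(\<Sum>d<D. log_readout e d * ereal (log_features D q d))
      = (\<Sum>d\<in>{?c, Suc ?c}. log_readout e d * ereal (log_features D q d))"
    by (rule sum.mono_neutral_right) (use assms in \<open>auto simp: log_readout_def\<close>)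
  also have "\<dots> = ln_ereal (q e)"
    using assms by (simp add: log_features_def log_readout_def ln_ereal_def inv_f_f[OF inj])
  finally show ?thesis .
qed

definition ngram_width :: "'a::finite itself \<Rightarrow> nat" where
  "ngram_width _ = 2 * Max (range (to_nat :: 'a \<Rightarrow> nat)) + 7"

lemma eos_index_lt_ngram_width: "4 + 2 * eos_index (e :: 'a::finite eos_sym) < ngram_width TYPE('a)"
proof -
  have "eos_index e \<le> Suc (Max (range (to_nat :: 'a \<Rightarrow> nat)))"
    by (cases e) (auto simp: eos_index_def)
  then show ?thesis
    unfolding ngram_width_def by simp
qed

text \<open>Head h looks back n - 2 - h positions, so it reads the h-th symbol of the history.\<close>
definition history_layer ::
    "nat \<Rightarrow> nat \<Rightarrow> ('a::countable bos_sym list \<Rightarrow> 'a eos_sym \<Rightarrow> real) \<Rightarrow> layer" where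
  "history_layer D n P = \<lparr>heads = map (\<lambda>h. lookback_head (n - 2 - h)) [0..<n - 1],
     combine = (\<lambda>Z. log_features D (P (map (\<lambda>h. inv bos_code (Z h 2)) [0..<n - 1])))\<rparr>"

definition ngram_transformer ::
    "nat \<Rightarrow> ('a::finite bos_sym list \<Rightarrow> 'a eos_sym \<Rightarrow> real) \<Rightarrow> 'a transformer" where
  "ngram_transformer n P = \<lparr>width = ngram_width TYPE('a), enc = position_enc,
     layers = [history_layer (ngram_width TYPE('a)) n P], final = id, outm = log_readout\<rparr>"

lemma wf_ngram_transformer: "wf_transformer (ngram_transformer n P)"
  unfolding wf_transformer_def ngram_transformer_def
  by (auto simp: layer_ok_def history_layer_def head_ok_def lookback_head_def in_width_def
      position_enc_def log_features_def ngram_width_def)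

lemma history_nth:
  assumes "k < n - 1"
  shows "history n y ! k = padded n y ! (length (padded n y) - (n - 1) + k)"
proof -
  have "length (padded n y) = n - 1 + length y"
    by (simp add: padded_def)
  then show ?thesis
    using assms unfolding history_def by (simp add: nth_drop)
qed

lemma last_layer_apply:
  assumes "xs \<noteq> []"
  shows "last (layer_apply \<pi> l xs) = combine l (\<lambda>h. if h < length (heads l)
           then head_apply \<pi> (heads l ! h) xs ! (length xs - 1) else (\<lambda>_. 0))"
  using assms by (simp add: layer_apply_def last_map cong: if_cong)

lemma ngram_transformer_last_rep:
  fixes P :: "'a::finite bos_sym list \<Rightarrow> 'a eos_sym \<Rightarrow> real"
  assumes n: "n \<ge> 2"
  shows "last (tf_reps hardmax (ngram_transformer n P) (padded n y))
         = log_features (ngram_width TYPE('a)) (P (history n y))"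
proof -
  define w where "w = padded n y"
  define xs where "xs = map (\<lambda>j. position_enc (w ! j) (Suc j)) [0..<length w]"
  have len: "length w = n - 1 + length y"
    unfolding w_def by (simp add: padded_def)
  have reads_history:
    "inv bos_code ((head_apply hardmax (lookback_head (n - 2 - h)) xs ! (length w - 1)) 2) = history n y ! h"
    if h: "h < n - 1" for h
  proof -
    have "(head_apply hardmax (lookback_head (n - 2 - h)) xs ! (length w - 1)) 2
        = bos_code (w ! (length w - 1 - (n - 2 - h)))"
      unfolding xs_def by (rule lookback_head_apply) (use len n h in auto)
    moreover have "length w - 1 - (n - 2 - h) = length w - (n - 1) + h"
      using len n h by linarith
    ultimately show ?thesis
      using h by (simp add: history_nth inv_f_f[OF inj_bos_code] w_def)
  qed
  have "map (\<lambda>h. inv bos_code ((if h < n - 1 then head_apply hardmax (lookback_head (n - 2 - h)) xs ! (length w - 1)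
          else (\<lambda>_. 0)) 2)) [0..<n - 1] = history n y"
    by (rule nth_equalityI) (simp add: history_def padded_def, use reads_history in simp)
  moreover have "xs \<noteq> []" and "length xs = length w"
    using len n by (simp_all add: xs_def)
  ultimately show ?thesis
    by (simp add: tf_reps_def ngram_transformer_def history_layer_def last_layer_apply w_def[symmetric]
        xs_def[symmetric] del: upt_Suc cong: if_cong)
qed

lemma tf_logit_ngram_transformer:
  assumes "n \<ge> 2"
  shows "tf_logit hardmax (ngram_transformer n P) (padded n y) e = ln_ereal (P (history n y) e)"
  unfolding tf_logit_def ngram_transformer_last_rep[OF assms]
  by (simp add: ngram_transformer_def log_readout_features eos_index_lt_ngram_width)

theorem theorem3p1:
  fixes p :: "('a::finite) cond_lm" and n :: nat
  assumes "n \<ge> 2" and "is_ngram_LM n p"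
  shows "\<exists>T :: 'a transformer.
           wf_transformer T \<and> length (layers T) = 1 \<and> length (heads (hd (layers T))) = n - 1 \<and>
           tf_output_ok n hardmax T \<and> weakly_equiv p (tf_cond n hardmax T)"
proof -
  from assms(2) obtain P where p_eq: "\<And>y. p y = P (history n y)" and "is_LM p"
    unfolding is_ngram_LM_def by blast
  then have distrib: "is_next_distrib (P (history n y))" for y
    unfolding is_LM_def by metis
  define T where "T = ngram_transformer n P"
  have logit: "tf_logit hardmax T (padded n y) e = ln_ereal (p y e)" for y e
    unfolding T_def p_eq by (rule tf_logit_ngram_transformer[OF assms(1)])
  have "tf_output_ok n hardmax T"
    using next_distrib_ex_pos[OF distrib] unfolding tf_output_ok_def logit p_eq
    by (auto simp: ln_ereal_def)
  moreover have "tf_cond n hardmax T = p"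
    unfolding tf_cond_def logit p_eq by (simp add: next_distrib_softmax_ln[OF distrib])
  ultimately show ?thesis
    using wf_ngram_transformer[of n P]
    by (intro exI[of _ T]) (simp add: T_def weakly_equiv_def ngram_transformer_def history_layer_def)
qed

end
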